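(* Let $u_1,u_2\in\mathbb{R}^D$ and let $k\ge1$ be an integer. Let $h:\{1,\dots,D\}\to\{1,\dots,k\}$ be a random hash function with $h(1),\dots,h(D)$ independent and uniformly distributed on $\{1,\dots,k\}$, and set $I_{ij}=1$ if $h(i)=j$ and $I_{ij}=0$ otherwise. Let $r_1,\dots,r_D$ be i.i.d. random variables, independent of $h$, with $E(r_i)=0$, $E(r_i^2)=1$, $E(r_i^3)=0$, $E(r_i^4)=s$. Define $g_{1,j}=\sum_{i=1}^D u_{1,i}r_iI_{ij}$ and $g_{2,j}=\sum_{i=1}^D u_{2,i}r_iI_{ij}$ for $j=1,\dots,k$, and $\hat a_{vw,s}=\sum_{j=1}^k g_{1,j}g_{2,j}$. Then $$E(\hat a_{vw,s})=\sum_{i=1}^D u_{1,i}u_{2,i},$$ $$\mathrm{Var}(\hat a_{vw,s})=(s-1)\sum_{i=1}^D u_{1,i}^2u_{2,i}^2+\frac1k\left[\sum_{i=1}^D u_{1,i}^2\sum_{i=1}^D u_{2,i}^2+\Big(\sum_{i=1}^D u_{1,i}u_{2,i}\Big)^2-2\sum_{i=1}^D u_{1,i}^2u_{2,i}^2\right].$$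
   Context: This is the (generalized) Vowpal Wabbit hashing estimator of the inner product $a=\sum_i u_{1,i}u_{2,i}$; the original VW algorithm corresponds to $r_i$ uniform on $\{-1,1\}$, i.e. $s=1$. *)

theory Defs
  imports "HOL-Probability.Probability"
begin

definition vw_g :: "nat \<Rightarrow> (nat \<Rightarrow> real) \<Rightarrow> (nat \<Rightarrow> 'a \<Rightarrow> nat)
    \<Rightarrow> (nat \<Rightarrow> 'a \<Rightarrow> real) \<Rightarrow> nat \<Rightarrow> 'a \<Rightarrow> real" where
  "vw_g D u h r j \<omega> = (\<Sum>i\<in>{1..D}. u i * r i \<omega> * (if h i \<omega> = j then 1 else 0))"

definition vw_est :: "nat \<Rightarrow> nat \<Rightarrow> (nat \<Rightarrow> real) \<Rightarrow> (nat \<Rightarrow> real)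
    \<Rightarrow> (nat \<Rightarrow> 'a \<Rightarrow> nat) \<Rightarrow> (nat \<Rightarrow> 'a \<Rightarrow> real) \<Rightarrow> 'a \<Rightarrow> real" where
  "vw_est D k u1 u2 h r \<omega> = (\<Sum>j\<in>{1..k}. vw_g D u1 h r j \<omega> * vw_g D u2 h r j \<omega>)"

text \<open>Mutual independence of the whole family h(1),...,h(D), r_1,...,r_D
  (the h(i) take values in nat, the r_i in the reals; independence of the
  generated sigma-algebras, which is exactly what indep_vars unfolds to).\<close>
definition vw_joint_indep :: "'a measure \<Rightarrow> nat \<Rightarrow> (nat \<Rightarrow> 'a \<Rightarrow> nat)
    \<Rightarrow> (nat \<Rightarrow> 'a \<Rightarrow> real) \<Rightarrow> bool" where
  "vw_joint_indep M D h r = prob_space.indep_sets M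
     (\<lambda>x. case x of
            Inl i \<Rightarrow> sets (vimage_algebra (space M) (h i) (count_space UNIV))
          | Inr i \<Rightarrow> sets (vimage_algebra (space M) (r i) borel))
     ({1..D} <+> {1..D})"

end

theory Submission
  imports Defs "HOL-Library.Multiset"
begin

text \<open>Write C(a,b) for the indicator of the hash collision h(a) = h(b). Then the estimator is
  the double sum of u1(a) u2(b) r(a) r(b) C(a,b), and its square the analogous fourfold sum.
  Since the signs r are independent of the hash values, each term factorises as
  E(r(a) r(b) r(c) r(d)) E(C(a,b) C(c,d)). The fourth moment vanishes unless the indices pair
  up; it is s if a = b = c = d and 1 for each of the three pairings otherwise, while
  E(C(a,b) C(c,d)) is 1 for the pairing a = b, c = d and 1/k for the other two. Summing these
  pattern indicators against the weights yields the mean and the second moment.\<close>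

lemma abs_power_le_1_plus_power4:
  assumes "n \<le> 4"
  shows "\<bar>(x::real) ^ n\<bar> \<le> 1 + x ^ 4"
proof (cases "\<bar>x\<bar> \<le> 1")
  case True
  then have "\<bar>x\<bar> ^ n \<le> 1" by (simp add: power_le_one)
  then show ?thesis by (simp add: power_abs zero_le_even_power add_increasing2)
next
  case False
  then have "\<bar>x\<bar> ^ n \<le> \<bar>x\<bar> ^ 4" using assms by (intro power_increasing) auto
  then show ?thesis by (simp add: power_abs)
qed

text \<open>E(r_i^n) for n \<le> 4; larger n never occur.\<close>
definition std_moment :: "real \<Rightarrow> nat \<Rightarrow> real" where
  "std_moment s n = (if n = 0 \<or> n = 2 then 1 else if n = 4 then s else 0)"

lemma prod_std_moment_pair:
  "(\<Prod>x\<in>set_mset {#a, b#}. std_moment s (count {#a, b#} x)) = of_bool (a = b)"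
  by (cases "a = b") (simp_all add: std_moment_def)

lemma prod_std_moment_quadruple:
  "(\<Prod>x\<in>set_mset {#a, b, c, d#}. std_moment s (count {#a, b, c, d#} x)) =
     (s - 3) * of_bool (a = b \<and> b = c \<and> c = d)
     + of_bool (a = b \<and> c = d) + of_bool (a = c \<and> b = d) + of_bool (a = d \<and> b = c)"
  by (cases "a = b"; cases "a = c"; cases "a = d"; cases "b = c"; cases "b = d"; cases "c = d")
     (simp_all add: std_moment_def insert_commute)

lemma Int_Collect_eq_conj: "A \<inter> {x. c = x \<and> P} = (if c \<in> A \<and> P then {c} else {})"
  by auto

lemma sum4_all_equal:
  fixes x y :: "'a \<Rightarrow> real"
  assumes "finite U"
  shows "(\<Sum>a\<in>U. \<Sum>b\<in>U. \<Sum>c\<in>U. \<Sum>d\<in>U. x a * y b * x c * y d * of_bool (a = b \<and> b = c \<and> c = d))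
    = (\<Sum>a\<in>U. (x a)\<^sup>2 * (y a)\<^sup>2)"
  using assms
  by (simp add: Int_Collect_eq_conj if_distrib[of "sum _"] sum.If_cases cong: if_cong split del: split_of_bool)
     (simp add: if_distrib[of "(\<inter>) _"] if_distrib[of "sum _"] power2_eq_square sum_product mult_ac cong: if_cong)

lemma sum4_pairing_ab_cd:
  fixes x y :: "'a \<Rightarrow> real"
  assumes "finite U"
  shows "(\<Sum>a\<in>U. \<Sum>b\<in>U. \<Sum>c\<in>U. \<Sum>d\<in>U. x a * y b * x c * y d * of_bool (a = b \<and> c = d))
    = (\<Sum>a\<in>U. x a * y a)\<^sup>2"
  using assms
  by (simp add: Int_Collect_eq_conj if_distrib[of "sum _"] sum.If_cases cong: if_cong split del: split_of_bool)
     (simp add: if_distrib[of "(\<inter>) _"] if_distrib[of "sum _"] power2_eq_square sum_product mult_ac cong: if_cong)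

lemma sum4_pairing_ac_bd:
  fixes x y :: "'a \<Rightarrow> real"
  assumes "finite U"
  shows "(\<Sum>a\<in>U. \<Sum>b\<in>U. \<Sum>c\<in>U. \<Sum>d\<in>U. x a * y b * x c * y d * of_bool (a = c \<and> b = d))
    = (\<Sum>a\<in>U. (x a)\<^sup>2) * (\<Sum>a\<in>U. (y a)\<^sup>2)"
  using assms
  by (simp add: Int_Collect_eq_conj if_distrib[of "sum _"] sum.If_cases cong: if_cong split del: split_of_bool)
     (simp add: if_distrib[of "(\<inter>) _"] if_distrib[of "sum _"] power2_eq_square sum_product mult_ac cong: if_cong)

lemma sum4_pairing_ad_bc:
  fixes x y :: "'a \<Rightarrow> real"
  assumes "finite U"
  shows "(\<Sum>a\<in>U. \<Sum>b\<in>U. \<Sum>c\<in>U. \<Sum>d\<in>U. x a * y b * x c * y d * of_bool (a = d \<and> b = c))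
    = (\<Sum>a\<in>U. x a * y a)\<^sup>2"
  using assms
  by (simp add: Int_Collect_eq_conj if_distrib[of "sum _"] sum.If_cases cong: if_cong split del: split_of_bool)
     (simp add: if_distrib[of "(\<inter>) _"] if_distrib[of "sum _"] power2_eq_square sum_product mult_ac cong: if_cong)

lemma (in prob_space) expectation_double_sum:
  fixes X :: "'i \<Rightarrow> 'j \<Rightarrow> 'a \<Rightarrow> real"
  assumes "\<And>a b. a \<in> A \<Longrightarrow> b \<in> B \<Longrightarrow> integrable M (X a b)"
  shows "expectation (\<lambda>\<omega>. \<Sum>a\<in>A. \<Sum>b\<in>B. c a b * X a b \<omega>) = (\<Sum>a\<in>A. \<Sum>b\<in>B. c a b * expectation (X a b))"
    and "integrable M (\<lambda>\<omega>. \<Sum>a\<in>A. \<Sum>b\<in>B. c a b * X a b \<omega>)"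
  using assms by (simp_all add: Bochner_Integration.integral_sum Bochner_Integration.integrable_sum)

lemma (in prob_space) expectation_quadruple_sum:
  fixes X :: "'i \<Rightarrow> 'i \<Rightarrow> 'i \<Rightarrow> 'i \<Rightarrow> 'a \<Rightarrow> real"
  assumes "\<And>a b c d. a \<in> A \<Longrightarrow> b \<in> A \<Longrightarrow> c \<in> A \<Longrightarrow> d \<in> A \<Longrightarrow> integrable M (X a b c d)"
  shows "expectation (\<lambda>\<omega>. \<Sum>a\<in>A. \<Sum>b\<in>A. \<Sum>c\<in>A. \<Sum>d\<in>A. w a b c d * X a b c d \<omega>) =
      (\<Sum>a\<in>A. \<Sum>b\<in>A. \<Sum>c\<in>A. \<Sum>d\<in>A. w a b c d * expectation (X a b c d))"
    and "integrable M (\<lambda>\<omega>. \<Sum>a\<in>A. \<Sum>b\<in>A. \<Sum>c\<in>A. \<Sum>d\<in>A. w a b c d * X a b c d \<omega>)"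
  using assms by (simp_all add: Bochner_Integration.integral_sum Bochner_Integration.integrable_sum)

locale vw_hashing = prob_space M for M :: "'a measure" +
  fixes D k :: nat and s :: real and h :: "nat \<Rightarrow> 'a \<Rightarrow> nat" and r :: "nat \<Rightarrow> 'a \<Rightarrow> real"
  assumes k_pos: "k \<ge> 1"
    and h_measurable: "\<And>i. i \<in> {1..D} \<Longrightarrow> h i \<in> measurable M (count_space UNIV)"
    and h_uniform: "\<And>i. i \<in> {1..D} \<Longrightarrow>
          distr M (count_space UNIV) (h i) = uniform_measure (count_space UNIV) {1..k}"
    and r_measurable: "\<And>i. i \<in> {1..D} \<Longrightarrow> r i \<in> borel_measurable M"
    and indep: "vw_joint_indep M D h r"
    and r_power4_integrable: "\<And>i. i \<in> {1..D} \<Longrightarrow> integrable M (\<lambda>\<omega>. r i \<omega> ^ 4)"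
    and r_moment1: "\<And>i. i \<in> {1..D} \<Longrightarrow> expectation (r i) = 0"
    and r_moment2: "\<And>i. i \<in> {1..D} \<Longrightarrow> expectation (\<lambda>\<omega>. r i \<omega> ^ 2) = 1"
    and r_moment3: "\<And>i. i \<in> {1..D} \<Longrightarrow> expectation (\<lambda>\<omega>. r i \<omega> ^ 3) = 0"
    and r_moment4: "\<And>i. i \<in> {1..D} \<Longrightarrow> expectation (\<lambda>\<omega>. r i \<omega> ^ 4) = s"
begin

text \<open>The \<open>h i\<close> and \<open>r i\<close> as one real-valued family, so that their joint independence
  becomes an instance of \<open>indep_vars\<close>.\<close>
definition hr_var :: "nat + nat \<Rightarrow> 'a \<Rightarrow> real" where
  "hr_var x \<omega> = (case x of Inl i \<Rightarrow> real (h i \<omega>) | Inr i \<Rightarrow> r i \<omega>)"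

lemma hr_var_simps [simp]: "hr_var (Inl i) = (\<lambda>\<omega>. real (h i \<omega>))" "hr_var (Inr i) = r i"
  by (simp_all add: hr_var_def fun_eq_iff)

lemma hr_var_measurable: "x \<in> {1..D} <+> {1..D} \<Longrightarrow> hr_var x \<in> borel_measurable M"
  using measurable_compose[OF h_measurable, of _ real borel] r_measurable by auto

lemma indep_hr_var: "indep_vars (\<lambda>_. borel) hr_var ({1..D} <+> {1..D})"
  unfolding indep_vars_def2
proof (intro conjI ballI hr_var_measurable indep_sets_mono_sets[OF indep[unfolded vw_joint_indep_def]])
  fix x assume "x \<in> {1..D} <+> {1..D}"
  have "(\<lambda>\<omega>. real (h i \<omega>)) -` A \<inter> space M \<in> sets (vimage_algebra (space M) (h i) (count_space UNIV))"
    for i and A :: "real set"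
    using in_vimage_algebra[of "real -` A" "count_space UNIV" "h i" "space M"] by (simp add: vimage_def)
  then show "{hr_var x -` A \<inter> space M |A. A \<in> sets borel} \<subseteq>
      (case x of Inl i \<Rightarrow> sets (vimage_algebra (space M) (h i) (count_space UNIV))
               | Inr i \<Rightarrow> sets (vimage_algebra (space M) (r i) borel))"
    by (auto intro: in_vimage_algebra split: sum.split)
qed

lemma expectation_prod_hr_var:
  assumes J: "finite J" "J \<subseteq> {1..D} <+> {1..D}"
    and \<phi>: "\<And>x. x \<in> J \<Longrightarrow> \<phi> x \<in> borel_measurable borel"
    and int: "\<And>x. x \<in> J \<Longrightarrow> integrable M (\<lambda>\<omega>. \<phi> x (hr_var x \<omega>))"
  shows "expectation (\<lambda>\<omega>. \<Prod>x\<in>J. \<phi> x (hr_var x \<omega>)) = (\<Prod>x\<in>J. expectation (\<lambda>\<omega>. \<phi> x (hr_var x \<omega>)))"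
    and "integrable M (\<lambda>\<omega>. \<Prod>x\<in>J. \<phi> x (hr_var x \<omega>) :: real)"
proof -
  have "indep_vars (\<lambda>_. borel) (\<lambda>x \<omega>. \<phi> x (hr_var x \<omega>)) J"
    using indep_vars_compose2[OF indep_vars_subset[OF indep_hr_var J(2)] \<phi>] .
  then show "expectation (\<lambda>\<omega>. \<Prod>x\<in>J. \<phi> x (hr_var x \<omega>)) = (\<Prod>x\<in>J. expectation (\<lambda>\<omega>. \<phi> x (hr_var x \<omega>)))"
    and "integrable M (\<lambda>\<omega>. \<Prod>x\<in>J. \<phi> x (hr_var x \<omega>) :: real)"
    using indep_vars_lebesgue_integral[OF J(1) _ int] indep_vars_integrable[OF J(1) _ int] by auto
qed

lemma r_power_integrable:
  assumes "i \<in> {1..D}" "n \<le> 4"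
  shows "integrable M (\<lambda>\<omega>. r i \<omega> ^ n)"
  using r_power4_integrable[OF assms(1)] r_measurable[OF assms(1)] abs_power_le_1_plus_power4[OF assms(2)]
  by (rule_tac Bochner_Integration.integrable_bound[where f = "\<lambda>\<omega>. 1 + r i \<omega> ^ 4"]) auto

lemma r_power_expectation: "i \<in> {1..D} \<Longrightarrow> n \<le> 4 \<Longrightarrow> expectation (\<lambda>\<omega>. r i \<omega> ^ n) = std_moment s n"
  using r_moment1 r_moment2 r_moment3 r_moment4
  by (auto simp: std_moment_def prob_space le_Suc_eq numeral_eq_Suc)

lemma expectation_prod_mset_r:
  assumes "set_mset N \<subseteq> {1..D}" "size N \<le> 4"
  shows "expectation (\<lambda>\<omega>. \<Prod>x\<in>#N. r x \<omega>) = (\<Prod>x\<in>set_mset N. std_moment s (count N x))"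
    and "integrable M (\<lambda>\<omega>. \<Prod>x\<in>#N. r x \<omega>)"
proof -
  have count: "count N x \<le> 4" for x
    using count_le_size[of N x] assms(2) by linarith
  define \<phi> where "\<phi> x t = t ^ count N (projr x)" for x :: "nat + nat" and t :: real
  have prod_eq: "(\<Prod>x\<in>#N. r x \<omega>) = (\<Prod>x\<in>Inr ` set_mset N. \<phi> x (hr_var x \<omega>))" for \<omega>
    by (simp add: \<phi>_def prod.reindex image_prod_mset_multiplicity)
  have J: "finite (Inr ` set_mset N)" "Inr ` set_mset N \<subseteq> {1..D} <+> {1..D}"
    using assms(1) by auto
  have \<phi>: "\<phi> x \<in> borel_measurable borel" for x
    unfolding \<phi>_def by measurable
  have int: "integrable M (\<lambda>\<omega>. \<phi> x (hr_var x \<omega>))" if "x \<in> Inr ` set_mset N" for x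
    using that assms(1) count by (auto simp: \<phi>_def subset_iff intro!: r_power_integrable)
  show "integrable M (\<lambda>\<omega>. \<Prod>x\<in>#N. r x \<omega>)"
    unfolding prod_eq by (rule expectation_prod_hr_var(2)[OF J \<phi> int])
  have "expectation (\<lambda>\<omega>. \<Prod>x\<in>#N. r x \<omega>) =
      (\<Prod>x\<in>Inr ` set_mset N. expectation (\<lambda>\<omega>. \<phi> x (hr_var x \<omega>)))"
    unfolding prod_eq by (rule expectation_prod_hr_var(1)[OF J \<phi> int])
  also have "\<dots> = (\<Prod>x\<in>set_mset N. std_moment s (count N x))"
    using assms(1) count
    by (subst prod.reindex) (auto simp: \<phi>_def subset_iff intro!: prod.cong r_power_expectation)
  finally show "expectation (\<lambda>\<omega>. \<Prod>x\<in>#N. r x \<omega>) = (\<Prod>x\<in>set_mset N. std_moment s (count N x))" .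
qed

lemma expectation_r_pair:
  assumes "a \<in> {1..D}" "b \<in> {1..D}"
  shows "expectation (\<lambda>\<omega>. r a \<omega> * r b \<omega>) = of_bool (a = b)"
    and "integrable M (\<lambda>\<omega>. r a \<omega> * r b \<omega>)"
  using expectation_prod_mset_r[of "{#a, b#}"] assms unfolding prod_std_moment_pair by simp_all

lemma expectation_r_quadruple:
  assumes "a \<in> {1..D}" "b \<in> {1..D}" "c \<in> {1..D}" "d \<in> {1..D}"
  shows "expectation (\<lambda>\<omega>. r a \<omega> * r b \<omega> * r c \<omega> * r d \<omega>) =
      (s - 3) * of_bool (a = b \<and> b = c \<and> c = d)
      + of_bool (a = b \<and> c = d) + of_bool (a = c \<and> b = d) + of_bool (a = d \<and> b = c)"
    and "integrable M (\<lambda>\<omega>. r a \<omega> * r b \<omega> * r c \<omega> * r d \<omega>)"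
  using expectation_prod_mset_r[of "{#a, b, c, d#}"] assms unfolding prod_std_moment_quadruple
  by (simp_all add: mult.assoc)

definition collision :: "nat \<Rightarrow> nat \<Rightarrow> 'a \<Rightarrow> real" where
  "collision p q \<omega> = (\<Sum>j\<in>{1..k}. of_bool (h p \<omega> = j) * of_bool (h q \<omega> = j))"

lemma collision_eq: "collision p q \<omega> = of_bool (h p \<omega> = h q \<omega> \<and> h p \<omega> \<in> {1..k})"
  by (auto simp: collision_def of_bool_def if_distrib[of "\<lambda>x. x * _"] cong: if_cong)

lemma collision_idem: "collision p q \<omega> * collision p q \<omega> = collision p q \<omega>"
  and collision_commute: "collision q p \<omega> = collision p q \<omega>"
  by (auto simp: collision_eq)

lemma prob_h_in:
  assumes "p \<in> {1..D}"
  shows "prob {\<omega>\<in>space M. h p \<omega> \<in> A} = card ({1..k} \<inter> A) / k"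
proof -
  have "prob {\<omega>\<in>space M. h p \<omega> \<in> A} = measure (distr M (count_space UNIV) (h p)) A"
    by (subst measure_distr[OF h_measurable[OF assms]]) (auto intro!: arg_cong[where f = prob])
  also have "\<dots> = card ({1..k} \<inter> A) / k"
    using k_pos by (simp add: h_uniform[OF assms] measure_count_space)
  finally show ?thesis .
qed

lemma AE_h_in_range:
  assumes "p \<in> {1..D}"
  shows "AE \<omega> in M. h p \<omega> \<in> {1..k}"
proof -
  have "prob {\<omega>\<in>space M. h p \<omega> \<in> {1..k}} = 1"
    using prob_h_in[OF assms, of "{1..k}"] k_pos by simp
  from AE_prob_1[OF this] show ?thesis by auto
qed

lemma expectation_h_indicator:
  assumes "p \<in> {1..D}"
  shows "expectation (\<lambda>\<omega>. of_bool (h p \<omega> = j)) = of_bool (j \<in> {1..k}) / k"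
proof -
  have "expectation (\<lambda>\<omega>. of_bool (h p \<omega> = j)) = expectation (indicator {\<omega>\<in>space M. h p \<omega> \<in> {j}})"
    by (intro Bochner_Integration.integral_cong) (auto simp: indicator_def)
  also have "\<dots> = prob {\<omega>\<in>space M. h p \<omega> \<in> {j}}"
    by (simp add: Int_absorb2 subset_eq)
  also have "\<dots> = of_bool (j \<in> {1..k}) / k"
    using prob_h_in[OF assms, of "{j}"] by (simp add: Int_insert_right)
  finally show ?thesis .
qed

lemma collision_measurable:
  assumes "p \<in> {1..D}" "q \<in> {1..D}"
  shows "collision p q \<in> borel_measurable M"
  using h_measurable[OF assms(1)] h_measurable[OF assms(2)] unfolding collision_def of_bool_def
  by measurable

lemma collision_integrable: "p \<in> {1..D} \<Longrightarrow> q \<in> {1..D} \<Longrightarrow> integrable M (collision p q)"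
  by (rule integrable_const_bound[where B = 1]) (auto simp: collision_eq collision_measurable)

lemma AE_collision_self: "p \<in> {1..D} \<Longrightarrow> AE \<omega> in M. collision p p \<omega> = 1"
  by (rule AE_mp[OF AE_h_in_range]) (auto simp: collision_eq)

lemma expectation_collision_self_mult:
  assumes "p \<in> {1..D}" "q \<in> {1..D}"
  shows "expectation (\<lambda>\<omega>. collision p p \<omega> * collision q q \<omega>) = 1"
proof -
  have "expectation (\<lambda>\<omega>. collision p p \<omega> * collision q q \<omega>) = expectation (\<lambda>\<omega>. 1)"
    using assms AE_collision_self[OF assms(1)] AE_collision_self[OF assms(2)] collision_measurable
    by (intro integral_cong_AE) auto
  then show ?thesis by (simp add: prob_space)
qed

lemma expectation_collision_self: "p \<in> {1..D} \<Longrightarrow> expectation (collision p p) = 1"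
  using expectation_collision_self_mult[of p p] by (simp add: collision_idem)

lemma expectation_h_indicators_mult:
  assumes p: "p \<in> {1..D}" and q: "q \<in> {1..D}" and "p \<noteq> q"
  shows "expectation (\<lambda>\<omega>. of_bool (h p \<omega> = i) * of_bool (h q \<omega> = j)) =
      expectation (\<lambda>\<omega>. of_bool (h p \<omega> = i)) * (expectation (\<lambda>\<omega>. of_bool (h q \<omega> = j)) :: real)"
    and "integrable M (\<lambda>\<omega>. of_bool (h p \<omega> = i) * of_bool (h q \<omega> = j) :: real)"
proof -
  define \<phi> where "\<phi> x = (indicator {real (if x = Inl p then i else j)} :: real \<Rightarrow> real)"
    for x :: "nat + nat"
  have J: "finite {Inl p, Inl q}" "{Inl p, Inl q} \<subseteq> {1..D} <+> {1..D}"
    using p q by auto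
  have \<phi>: "\<phi> x \<in> borel_measurable borel" for x
    unfolding \<phi>_def by (rule borel_measurable_indicator) simp
  have int: "integrable M (\<lambda>\<omega>. \<phi> x (hr_var x \<omega>))" if "x \<in> {Inl p, Inl q}" for x
    using that J(2) by (intro integrable_const_bound[where B = 1] measurable_compose[OF hr_var_measurable \<phi>])
      (auto simp: \<phi>_def)
  have prod: "of_bool (h p \<omega> = i) * of_bool (h q \<omega> = j) = (\<Prod>x\<in>{Inl p, Inl q}. \<phi> x (hr_var x \<omega>))" for \<omega>
    using \<open>p \<noteq> q\<close> by (simp add: \<phi>_def indicator_def)
  show "integrable M (\<lambda>\<omega>. of_bool (h p \<omega> = i) * of_bool (h q \<omega> = j) :: real)"
    unfolding prod by (rule expectation_prod_hr_var(2)[OF J \<phi> int])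
  have "expectation (\<lambda>\<omega>. of_bool (h p \<omega> = i) * of_bool (h q \<omega> = j)) =
      (\<Prod>x\<in>{Inl p, Inl q}. expectation (\<lambda>\<omega>. \<phi> x (hr_var x \<omega>)))"
    unfolding prod by (rule expectation_prod_hr_var(1)[OF J \<phi> int])
  also have "\<dots> = expectation (\<lambda>\<omega>. of_bool (h p \<omega> = i)) * expectation (\<lambda>\<omega>. of_bool (h q \<omega> = j))"
    using \<open>p \<noteq> q\<close> by (simp add: \<phi>_def indicator_def)
  finally show "expectation (\<lambda>\<omega>. of_bool (h p \<omega> = i) * of_bool (h q \<omega> = j)) =
      expectation (\<lambda>\<omega>. of_bool (h p \<omega> = i)) * (expectation (\<lambda>\<omega>. of_bool (h q \<omega> = j)) :: real)" .
qed

lemma expectation_collision_distinct: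
  assumes p: "p \<in> {1..D}" and q: "q \<in> {1..D}" and "p \<noteq> q"
  shows "expectation (collision p q) = 1 / k"
proof -
  note indep = expectation_h_indicators_mult[OF p q \<open>p \<noteq> q\<close>]
  have "expectation (collision p q) =
      (\<Sum>j\<in>{1..k}. expectation (\<lambda>\<omega>. of_bool (h p \<omega> = j)) * expectation (\<lambda>\<omega>. of_bool (h q \<omega> = j)))"
    unfolding collision_def using indep by (subst Bochner_Integration.integral_sum) auto
  also have "\<dots> = (\<Sum>j\<in>{1..k}. 1 / k * (1 / k))"
    by (simp add: expectation_h_indicator[OF p] expectation_h_indicator[OF q])
  also have "\<dots> = 1 / k"
    using k_pos by simp
  finally show ?thesis .
qed

definition r_block :: "'a \<Rightarrow> nat + nat \<Rightarrow> real" where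
  "r_block \<omega> = restrict (\<lambda>x. hr_var x \<omega>) (Inr ` {1..D})"

definition h_block :: "'a \<Rightarrow> nat + nat \<Rightarrow> real" where
  "h_block \<omega> = restrict (\<lambda>x. hr_var x \<omega>) (Inl ` {1..D})"

lemma expectation_mult_blocks:
  fixes F G :: "(nat + nat \<Rightarrow> real) \<Rightarrow> real"
  assumes F: "F \<in> borel_measurable (PiM (Inr ` {1..D}) (\<lambda>_. borel))"
    and G: "G \<in> borel_measurable (PiM (Inl ` {1..D}) (\<lambda>_. borel))"
    and int: "integrable M (\<lambda>\<omega>. F (r_block \<omega>))" "integrable M (\<lambda>\<omega>. G (h_block \<omega>))"
  shows "expectation (\<lambda>\<omega>. F (r_block \<omega>) * G (h_block \<omega>)) =
      expectation (\<lambda>\<omega>. F (r_block \<omega>)) * expectation (\<lambda>\<omega>. G (h_block \<omega>))"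
    and "integrable M (\<lambda>\<omega>. F (r_block \<omega>) * G (h_block \<omega>))"
proof -
  have "indep_var (PiM (Inr ` {1..D}) (\<lambda>_. borel)) r_block (PiM (Inl ` {1..D}) (\<lambda>_. borel)) h_block"
    unfolding r_block_def h_block_def by (rule indep_var_restrict[OF indep_hr_var]) auto
  from indep_var_compose[OF this F G]
  have "indep_var borel (\<lambda>\<omega>. F (r_block \<omega>)) borel (\<lambda>\<omega>. G (h_block \<omega>))"
    by (simp add: comp_def)
  then show "expectation (\<lambda>\<omega>. F (r_block \<omega>) * G (h_block \<omega>)) =
      expectation (\<lambda>\<omega>. F (r_block \<omega>)) * expectation (\<lambda>\<omega>. G (h_block \<omega>))"
    and "integrable M (\<lambda>\<omega>. F (r_block \<omega>) * G (h_block \<omega>))"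
    using indep_var_lebesgue_integral[OF _ int] indep_var_integrable[OF _ int] by auto
qed

lemma r_block_apply [simp]: "a \<in> {1..D} \<Longrightarrow> r_block \<omega> (Inr a) = r a \<omega>"
  by (simp add: r_block_def)

lemma r_block_component_measurable:
  "a \<in> {1..D} \<Longrightarrow> (\<lambda>f. f (Inr a)) \<in> borel_measurable (PiM (Inr ` {1..D}) (\<lambda>_. borel))"
  by (rule measurable_component_singleton) simp

definition block_collision :: "(nat + nat \<Rightarrow> real) \<Rightarrow> nat \<Rightarrow> nat \<Rightarrow> real" where
  "block_collision f p q = (\<Sum>j\<in>{1..k}. of_bool (f (Inl p) = real j) * of_bool (f (Inl q) = real j))"

lemma collision_h_block:
  "p \<in> {1..D} \<Longrightarrow> q \<in> {1..D} \<Longrightarrow> collision p q \<omega> = block_collision (h_block \<omega>) p q"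
  by (simp add: collision_def block_collision_def h_block_def)

lemma block_collision_measurable:
  assumes "p \<in> {1..D}" "q \<in> {1..D}"
  shows "(\<lambda>f. block_collision f p q) \<in> borel_measurable (PiM (Inl ` {1..D}) (\<lambda>_. borel))"
proof -
  have [measurable]: "(\<lambda>f. f (Inl x)) \<in> borel_measurable (PiM (Inl ` {1..D}) (\<lambda>_. borel))"
    if "x \<in> {p, q}" for x
    using assms that by (intro measurable_component_singleton) auto
  show ?thesis
    unfolding block_collision_def of_bool_def by measurable
qed

lemma expectation_r_pair_collision:
  assumes ab: "a \<in> {1..D}" "b \<in> {1..D}"
  shows "expectation (\<lambda>\<omega>. r a \<omega> * r b \<omega> * collision a b \<omega>) = of_bool (a = b)"
    and "integrable M (\<lambda>\<omega>. r a \<omega> * r b \<omega> * collision a b \<omega>)"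
proof -
  have F: "(\<lambda>f. f (Inr a) * f (Inr b) :: real) \<in> borel_measurable (PiM (Inr ` {1..D}) (\<lambda>_. borel))"
    by (intro borel_measurable_times r_block_component_measurable ab)
  have eq: "r a \<omega> * r b \<omega> * collision a b \<omega> =
      r_block \<omega> (Inr a) * r_block \<omega> (Inr b) * block_collision (h_block \<omega>) a b" for \<omega>
    using ab by (simp add: collision_h_block)
  have int: "integrable M (\<lambda>\<omega>. r_block \<omega> (Inr a) * r_block \<omega> (Inr b))"
    "integrable M (\<lambda>\<omega>. block_collision (h_block \<omega>) a b)"
    using expectation_r_pair(2)[OF ab] collision_integrable[OF ab] ab
    by (simp_all flip: collision_h_block)
  note blocks = expectation_mult_blocks[OF F block_collision_measurable[OF ab] int]
  show "integrable M (\<lambda>\<omega>. r a \<omega> * r b \<omega> * collision a b \<omega>)"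
    unfolding eq using blocks(2) by simp
  show "expectation (\<lambda>\<omega>. r a \<omega> * r b \<omega> * collision a b \<omega>) = of_bool (a = b)"
    unfolding eq using blocks(1) ab
    by (simp add: expectation_r_pair(1) expectation_collision_self flip: collision_h_block)
qed

lemma expectation_r_quadruple_collisions_factor:
  assumes abcd: "a \<in> {1..D}" "b \<in> {1..D}" "c \<in> {1..D}" "d \<in> {1..D}"
  shows "expectation (\<lambda>\<omega>. r a \<omega> * r b \<omega> * r c \<omega> * r d \<omega> * (collision a b \<omega> * collision c d \<omega>)) =
      expectation (\<lambda>\<omega>. r a \<omega> * r b \<omega> * r c \<omega> * r d \<omega>) * expectation (\<lambda>\<omega>. collision a b \<omega> * collision c d \<omega>)"
    and "integrable M (\<lambda>\<omega>. r a \<omega> * r b \<omega> * r c \<omega> * r d \<omega> * (collision a b \<omega> * collision c d \<omega>))"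
proof -
  have F: "(\<lambda>f. f (Inr a) * f (Inr b) * f (Inr c) * f (Inr d) :: real)
      \<in> borel_measurable (PiM (Inr ` {1..D}) (\<lambda>_. borel))"
    by (intro borel_measurable_times r_block_component_measurable abcd)
  have G: "(\<lambda>f. block_collision f a b * block_collision f c d)
      \<in> borel_measurable (PiM (Inl ` {1..D}) (\<lambda>_. borel))"
    using abcd by (intro borel_measurable_times block_collision_measurable)
  have eq: "r a \<omega> * r b \<omega> * r c \<omega> * r d \<omega> * (collision a b \<omega> * collision c d \<omega>) =
      r_block \<omega> (Inr a) * r_block \<omega> (Inr b) * r_block \<omega> (Inr c) * r_block \<omega> (Inr d)
      * (block_collision (h_block \<omega>) a b * block_collision (h_block \<omega>) c d)" for \<omega>
    using abcd by (simp add: collision_h_block)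
  have "integrable M (\<lambda>\<omega>. collision a b \<omega> * collision c d \<omega>)"
    using abcd
    by (intro integrable_const_bound[where B = 1] borel_measurable_times collision_measurable)
       (auto simp: collision_eq)
  then have int: "integrable M (\<lambda>\<omega>. r_block \<omega> (Inr a) * r_block \<omega> (Inr b) * r_block \<omega> (Inr c) * r_block \<omega> (Inr d))"
    "integrable M (\<lambda>\<omega>. block_collision (h_block \<omega>) a b * block_collision (h_block \<omega>) c d)"
    using expectation_r_quadruple(2)[OF abcd] abcd by (simp_all flip: collision_h_block)
  note blocks = expectation_mult_blocks[OF F G int]
  show "integrable M (\<lambda>\<omega>. r a \<omega> * r b \<omega> * r c \<omega> * r d \<omega> * (collision a b \<omega> * collision c d \<omega>))"
    unfolding eq using blocks(2) by simp
  show "expectation (\<lambda>\<omega>. r a \<omega> * r b \<omega> * r c \<omega> * r d \<omega> * (collision a b \<omega> * collision c d \<omega>)) =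
      expectation (\<lambda>\<omega>. r a \<omega> * r b \<omega> * r c \<omega> * r d \<omega>) * expectation (\<lambda>\<omega>. collision a b \<omega> * collision c d \<omega>)"
    unfolding eq using blocks(1) abcd by (simp flip: collision_h_block)
qed

lemma expectation_r_quadruple_collisions:
  assumes abcd: "a \<in> {1..D}" "b \<in> {1..D}" "c \<in> {1..D}" "d \<in> {1..D}"
  shows "expectation (\<lambda>\<omega>. r a \<omega> * r b \<omega> * r c \<omega> * r d \<omega> * (collision a b \<omega> * collision c d \<omega>)) =
      (s - 1 - 2 / k) * of_bool (a = b \<and> b = c \<and> c = d) + of_bool (a = b \<and> c = d)
      + (of_bool (a = c \<and> b = d) + of_bool (a = d \<and> b = c)) / k"
proof -
  note factor = expectation_r_quadruple_collisions_factor(1)[OF abcd]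
  consider (all) "a = b \<and> b = c \<and> c = d" | (ab_cd) "a = b \<and> c = d \<and> a \<noteq> c"
    | (ac_bd) "a = c \<and> b = d \<and> a \<noteq> b" | (ad_bc) "a = d \<and> b = c \<and> a \<noteq> b"
    | (unpaired) "\<not> (a = b \<and> c = d) \<and> \<not> (a = c \<and> b = d) \<and> \<not> (a = d \<and> b = c)"
    by blast
  then show ?thesis
  proof cases
    case all
    then show ?thesis
      using abcd unfolding factor by (simp add: expectation_r_quadruple expectation_collision_self_mult)
  next
    case ab_cd
    then show ?thesis
      using abcd unfolding factor by (simp add: expectation_r_quadruple expectation_collision_self_mult)
  next
    case ac_bd
    then show ?thesis
      using abcd unfolding factor by (simp add: expectation_r_quadruple collision_idem expectation_collision_distinct)
  next
    case ad_bc
    then show ?thesis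
      using abcd unfolding factor
      by (simp add: expectation_r_quadruple collision_commute collision_idem expectation_collision_distinct)
  next
    case unpaired
    then have "\<not> (a = b \<and> b = c \<and> c = d)" "\<not> (a = b \<and> c = d)" "\<not> (a = c \<and> b = d)"
      "\<not> (a = d \<and> b = c)"
      by auto
    then show ?thesis
      unfolding factor expectation_r_quadruple(1)[OF abcd] by (simp only: of_bool_eq) simp
  qed
qed

lemma vw_est_expand:
  "vw_est D k u1 u2 h r = (\<lambda>\<omega>. \<Sum>a\<in>{1..D}. \<Sum>b\<in>{1..D}. u1 a * u2 b * (r a \<omega> * r b \<omega> * collision a b \<omega>))"
proof
  fix \<omega>
  have "vw_est D k u1 u2 h r \<omega> = (\<Sum>j\<in>{1..k}. \<Sum>a\<in>{1..D}. \<Sum>b\<in>{1..D}.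
      u1 a * u2 b * (r a \<omega> * r b \<omega> * (of_bool (h a \<omega> = j) * of_bool (h b \<omega> = j))))"
    unfolding vw_est_def vw_g_def sum_product by (simp add: of_bool_def mult_ac)
  also have "\<dots> = (\<Sum>a\<in>{1..D}. \<Sum>j\<in>{1..k}. \<Sum>b\<in>{1..D}.
      u1 a * u2 b * (r a \<omega> * r b \<omega> * (of_bool (h a \<omega> = j) * of_bool (h b \<omega> = j))))"
    by (rule sum.swap)
  also have "\<dots> = (\<Sum>a\<in>{1..D}. \<Sum>b\<in>{1..D}. \<Sum>j\<in>{1..k}.
      u1 a * u2 b * (r a \<omega> * r b \<omega> * (of_bool (h a \<omega> = j) * of_bool (h b \<omega> = j))))"
    by (rule sum.cong[OF refl]) (rule sum.swap)
  also have "\<dots> = (\<Sum>a\<in>{1..D}. \<Sum>b\<in>{1..D}. u1 a * u2 b * (r a \<omega> * r b \<omega> * collision a b \<omega>))"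
    by (simp only: collision_def sum_distrib_left)
  finally show "vw_est D k u1 u2 h r \<omega> =
      (\<Sum>a\<in>{1..D}. \<Sum>b\<in>{1..D}. u1 a * u2 b * (r a \<omega> * r b \<omega> * collision a b \<omega>))" .
qed

lemma vw_est_square_expand:
  "(vw_est D k u1 u2 h r \<omega>)\<^sup>2 = (\<Sum>a\<in>{1..D}. \<Sum>b\<in>{1..D}. \<Sum>c\<in>{1..D}. \<Sum>d\<in>{1..D}.
      u1 a * u2 b * u1 c * u2 d * (r a \<omega> * r b \<omega> * r c \<omega> * r d \<omega> * (collision a b \<omega> * collision c d \<omega>)))"
  unfolding power2_eq_square vw_est_expand sum_distrib_left sum_distrib_right by (simp add: mult_ac)

lemma expectation_vw_est: "expectation (vw_est D k u1 u2 h r) = (\<Sum>i\<in>{1..D}. u1 i * u2 i)"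
    and vw_est_integrable: "integrable M (vw_est D k u1 u2 h r)"
proof -
  note sums = expectation_double_sum[where A = "{1..D}" and B = "{1..D}" and c = "\<lambda>a b. u1 a * u2 b",
      OF expectation_r_pair_collision(2)]
  show "integrable M (vw_est D k u1 u2 h r)"
    unfolding vw_est_expand by (rule sums(2)) auto
  have "expectation (vw_est D k u1 u2 h r) = (\<Sum>a\<in>{1..D}. \<Sum>b\<in>{1..D}.
      u1 a * u2 b * expectation (\<lambda>\<omega>. r a \<omega> * r b \<omega> * collision a b \<omega>))"
    unfolding vw_est_expand by (rule sums(1)) auto
  also have "\<dots> = (\<Sum>i\<in>{1..D}. u1 i * u2 i)"
    by (simp add: expectation_r_pair_collision(1) of_bool_def if_distrib[of "\<lambda>x. _ * x"] cong: if_cong)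
  finally show "expectation (vw_est D k u1 u2 h r) = (\<Sum>i\<in>{1..D}. u1 i * u2 i)" .
qed

lemma expectation_vw_est_square:
  "expectation (\<lambda>\<omega>. (vw_est D k u1 u2 h r \<omega>)\<^sup>2) =
      (s - 1 - 2 / k) * (\<Sum>i\<in>{1..D}. (u1 i)\<^sup>2 * (u2 i)\<^sup>2) + (\<Sum>i\<in>{1..D}. u1 i * u2 i)\<^sup>2
      + ((\<Sum>i\<in>{1..D}. (u1 i)\<^sup>2) * (\<Sum>i\<in>{1..D}. (u2 i)\<^sup>2) + (\<Sum>i\<in>{1..D}. u1 i * u2 i)\<^sup>2) / k"
  and vw_est_square_integrable: "integrable M (\<lambda>\<omega>. (vw_est D k u1 u2 h r \<omega>)\<^sup>2)"
proof -
  let ?w = "\<lambda>a b c d. u1 a * u2 b * u1 c * u2 d"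
  note sums = expectation_quadruple_sum[where A = "{1..D}" and w = ?w,
      OF expectation_r_quadruple_collisions_factor(2)]
  show "integrable M (\<lambda>\<omega>. (vw_est D k u1 u2 h r \<omega>)\<^sup>2)"
    unfolding vw_est_square_expand by (rule sums(2)) auto
  have "expectation (\<lambda>\<omega>. (vw_est D k u1 u2 h r \<omega>)\<^sup>2) =
      (\<Sum>a\<in>{1..D}. \<Sum>b\<in>{1..D}. \<Sum>c\<in>{1..D}. \<Sum>d\<in>{1..D}. ?w a b c d *
        ((s - 1 - 2 / k) * of_bool (a = b \<and> b = c \<and> c = d) + of_bool (a = b \<and> c = d)
         + (of_bool (a = c \<and> b = d) + of_bool (a = d \<and> b = c)) / k))"
    unfolding vw_est_square_expand
    by (subst sums(1)) (auto simp: expectation_r_quadruple_collisions(1))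
  also have "\<dots> = (s - 1 - 2 / k) * (\<Sum>a\<in>{1..D}. \<Sum>b\<in>{1..D}. \<Sum>c\<in>{1..D}. \<Sum>d\<in>{1..D}.
        ?w a b c d * of_bool (a = b \<and> b = c \<and> c = d))
      + (\<Sum>a\<in>{1..D}. \<Sum>b\<in>{1..D}. \<Sum>c\<in>{1..D}. \<Sum>d\<in>{1..D}. ?w a b c d * of_bool (a = b \<and> c = d))
      + ((\<Sum>a\<in>{1..D}. \<Sum>b\<in>{1..D}. \<Sum>c\<in>{1..D}. \<Sum>d\<in>{1..D}. ?w a b c d * of_bool (a = c \<and> b = d))
         + (\<Sum>a\<in>{1..D}. \<Sum>b\<in>{1..D}. \<Sum>c\<in>{1..D}. \<Sum>d\<in>{1..D}. ?w a b c d * of_bool (a = d \<and> b = c))) / k"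
    by (simp add: distrib_left add_divide_distrib sum.distrib sum_distrib_left sum_divide_distrib mult_ac
        split del: split_of_bool)
  also have "\<dots> = (s - 1 - 2 / k) * (\<Sum>i\<in>{1..D}. (u1 i)\<^sup>2 * (u2 i)\<^sup>2) + (\<Sum>i\<in>{1..D}. u1 i * u2 i)\<^sup>2
      + ((\<Sum>i\<in>{1..D}. (u1 i)\<^sup>2) * (\<Sum>i\<in>{1..D}. (u2 i)\<^sup>2) + (\<Sum>i\<in>{1..D}. u1 i * u2 i)\<^sup>2) / k"
    by (simp only: sum4_all_equal sum4_pairing_ab_cd sum4_pairing_ac_bd sum4_pairing_ad_bc finite_atLeastAtMost)
  finally show "expectation (\<lambda>\<omega>. (vw_est D k u1 u2 h r \<omega>)\<^sup>2) =
      (s - 1 - 2 / k) * (\<Sum>i\<in>{1..D}. (u1 i)\<^sup>2 * (u2 i)\<^sup>2) + (\<Sum>i\<in>{1..D}. u1 i * u2 i)\<^sup>2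
      + ((\<Sum>i\<in>{1..D}. (u1 i)\<^sup>2) * (\<Sum>i\<in>{1..D}. (u2 i)\<^sup>2) + (\<Sum>i\<in>{1..D}. u1 i * u2 i)\<^sup>2) / k" .
qed

lemma variance_vw_est:
  "variance (vw_est D k u1 u2 h r) =
      (s - 1) * (\<Sum>i\<in>{1..D}. (u1 i)\<^sup>2 * (u2 i)\<^sup>2)
      + 1 / real k * ((\<Sum>i\<in>{1..D}. (u1 i)\<^sup>2) * (\<Sum>i\<in>{1..D}. (u2 i)\<^sup>2)
        + (\<Sum>i\<in>{1..D}. u1 i * u2 i)\<^sup>2 - 2 * (\<Sum>i\<in>{1..D}. (u1 i)\<^sup>2 * (u2 i)\<^sup>2))"
proof -
  have "variance (vw_est D k u1 u2 h r) =
      expectation (\<lambda>\<omega>. (vw_est D k u1 u2 h r \<omega>)\<^sup>2) - (expectation (vw_est D k u1 u2 h r))\<^sup>2"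
    by (rule variance_eq[OF vw_est_integrable vw_est_square_integrable])
  also have "\<dots> = (s - 1) * (\<Sum>i\<in>{1..D}. (u1 i)\<^sup>2 * (u2 i)\<^sup>2)
      + 1 / real k * ((\<Sum>i\<in>{1..D}. (u1 i)\<^sup>2) * (\<Sum>i\<in>{1..D}. (u2 i)\<^sup>2)
        + (\<Sum>i\<in>{1..D}. u1 i * u2 i)\<^sup>2 - 2 * (\<Sum>i\<in>{1..D}. (u1 i)\<^sup>2 * (u2 i)\<^sup>2))"
    unfolding expectation_vw_est expectation_vw_est_square using k_pos by (simp add: field_simps)
  finally show ?thesis .
qed

end

theorem lemma1:
  fixes M :: "'a measure" and D k :: nat and s :: real
    and u1 u2 :: "nat \<Rightarrow> real"
    and h :: "nat \<Rightarrow> 'a \<Rightarrow> nat" and r :: "nat \<Rightarrow> 'a \<Rightarrow> real"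
  assumes "prob_space M"
    and "k \<ge> 1"
    and h_meas: "\<And>i. i \<in> {1..D} \<Longrightarrow> h i \<in> measurable M (count_space UNIV)"
    and h_unif: "\<And>i. i \<in> {1..D} \<Longrightarrow>
          distr M (count_space UNIV) (h i) = uniform_measure (count_space UNIV) {1..k}"
    and r_meas: "\<And>i. i \<in> {1..D} \<Longrightarrow> r i \<in> borel_measurable M"
    and r_ident: "\<And>i j. i \<in> {1..D} \<Longrightarrow> j \<in> {1..D} \<Longrightarrow> distr M borel (r i) = distr M borel (r j)"
    and indep: "vw_joint_indep M D h r"
    and r_int4: "\<And>i. i \<in> {1..D} \<Longrightarrow> integrable M (\<lambda>\<omega>. r i \<omega> ^ 4)"
    and m1: "\<And>i. i \<in> {1..D} \<Longrightarrow> prob_space.expectation M (r i) = 0"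
    and m2: "\<And>i. i \<in> {1..D} \<Longrightarrow> prob_space.expectation M (\<lambda>\<omega>. r i \<omega> ^ 2) = 1"
    and m3: "\<And>i. i \<in> {1..D} \<Longrightarrow> prob_space.expectation M (\<lambda>\<omega>. r i \<omega> ^ 3) = 0"
    and m4: "\<And>i. i \<in> {1..D} \<Longrightarrow> prob_space.expectation M (\<lambda>\<omega>. r i \<omega> ^ 4) = s"
  shows "prob_space.expectation M (vw_est D k u1 u2 h r) = (\<Sum>i\<in>{1..D}. u1 i * u2 i)
     \<and> prob_space.variance M (vw_est D k u1 u2 h r) =
           (s - 1) * (\<Sum>i\<in>{1..D}. (u1 i)^2 * (u2 i)^2)
         + 1 / real k * ((\<Sum>i\<in>{1..D}. (u1 i)^2) * (\<Sum>i\<in>{1..D}. (u2 i)^2)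
              + (\<Sum>i\<in>{1..D}. u1 i * u2 i)^2
              - 2 * (\<Sum>i\<in>{1..D}. (u1 i)^2 * (u2 i)^2))"
proof -
  interpret vw_hashing M D k s h r
    using assms by (intro vw_hashing.intro vw_hashing_axioms.intro) auto
  show ?thesis
    by (rule conjI[OF expectation_vw_est variance_vw_est])
qed

end
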